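(* Let $G \in \mathbf{Bl}(\mathbf{k},\varphi)$ and let $\mathcal{D}$ be a maximum dissociation set of $G$. Then $G$ is not a graph with maximal spectral radius in $\mathbf{Bl}(\mathbf{k},\varphi)$ if any one of the following holds: (i) $G$ has a block $B$ with $|B\cap\mathcal{D}|=0$; (ii) $\mathcal{D}$ contains a cut vertex of $G$; (iii) $G$ has two adjacent blocks $B_1,B_2$ with $|B_1\cap\mathcal{D}|=|B_2\cap\mathcal{D}|=1$.
   Context: All graphs are finite, simple and connected. A block of $G$ is a maximal connected subgraph without a cut vertex; two blocks are adjacent if they share a cut vertex. A block graph is a connected graph each of whose blocks is a complete graph. A set $\mathcal{D}\subseteq V(G)$ is a dissociation set if the subgraph induced by $\mathcal{D}$ has maximum degree at most $1$; the dissociation number $\varphi(G)$ is the maximum size of a dissociation set, and a maximum dissociation set is one of size $\varphi(G)$ (the paper calls it a "maximal dissociation set"). $\mathbf{Bl}(\mathbf{k},\varphi)$ denotes the class of block graphs on $\mathbf{k}$ vertices with dissociation number $\varphi$. $\rho(G)$ denotes the spectral radius (largest eigenvalue) of the adjacency matrix of $G$. A graph $\widehat G\in\mathbf{Bl}(\mathbf{k},\varphi)$ is called a graph with maximal spectral radius in $\mathbf{Bl}(\mathbf{k},\varphi)$ if $\rho(G)\le\rho(\widehat G)$ for all $G\in\mathbf{Bl}(\mathbf{k},\varphi)$. *)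

theory Defs
  imports Complex_Main
begin

definition simple_graph :: "'a set \<Rightarrow> 'a set set \<Rightarrow> bool" where
  "simple_graph V E \<longleftrightarrow> finite V \<and> (\<forall>e\<in>E. e \<subseteq> V \<and> card e = 2)"

definition adj :: "'a set set \<Rightarrow> 'a \<Rightarrow> 'a \<Rightarrow> bool" where
  "adj E u v \<longleftrightarrow> {u, v} \<in> E"

definition connected_on :: "'a set set \<Rightarrow> 'a set \<Rightarrow> bool" where
  "connected_on E S \<longleftrightarrow> S \<noteq> {} \<and>
     (\<forall>u\<in>S. \<forall>v\<in>S. (\<lambda>x y. x \<in> S \<and> y \<in> S \<and> adj E x y)\<^sup>*\<^sup>* u v)"

definition connected_graph :: "'a set \<Rightarrow> 'a set set \<Rightarrow> bool" where
  "connected_graph V E \<longleftrightarrow> simple_graph V E \<and> connected_on E V"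

definition cut_vertex_on :: "'a set set \<Rightarrow> 'a set \<Rightarrow> 'a \<Rightarrow> bool" where
  "cut_vertex_on E S v \<longleftrightarrow> v \<in> S \<and> S - {v} \<noteq> {} \<and> \<not> connected_on E (S - {v})"

definition nonsep_on :: "'a set set \<Rightarrow> 'a set \<Rightarrow> bool" where
  "nonsep_on E S \<longleftrightarrow> connected_on E S \<and> (\<forall>v\<in>S. \<not> cut_vertex_on E S v)"

definition block :: "'a set \<Rightarrow> 'a set set \<Rightarrow> 'a set \<Rightarrow> bool" where
  "block V E B \<longleftrightarrow> B \<subseteq> V \<and> nonsep_on E B \<and>
     (\<forall>B'. B \<subseteq> B' \<and> B' \<subseteq> V \<and> nonsep_on E B' \<longrightarrow> B' = B)"

definition adjacent_blocks :: "'a set \<Rightarrow> 'a set set \<Rightarrow> 'a set \<Rightarrow> 'a set \<Rightarrow> bool" where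
  "adjacent_blocks V E B1 B2 \<longleftrightarrow> block V E B1 \<and> block V E B2 \<and> B1 \<noteq> B2 \<and>
     (\<exists>v. v \<in> B1 \<and> v \<in> B2 \<and> cut_vertex_on E V v)"

definition block_graph :: "'a set \<Rightarrow> 'a set set \<Rightarrow> bool" where
  "block_graph V E \<longleftrightarrow> connected_graph V E \<and>
     (\<forall>B. block V E B \<longrightarrow> (\<forall>u\<in>B. \<forall>v\<in>B. u \<noteq> v \<longrightarrow> adj E u v))"

definition dissociation_set :: "'a set \<Rightarrow> 'a set set \<Rightarrow> 'a set \<Rightarrow> bool" where
  "dissociation_set V E D \<longleftrightarrow> D \<subseteq> V \<and> (\<forall>v\<in>D. card {u\<in>D. adj E u v} \<le> 1)"

definition dissociation_number :: "'a set \<Rightarrow> 'a set set \<Rightarrow> nat" where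
  "dissociation_number V E = Max (card ` {D. dissociation_set V E D})"

definition max_dissociation_set :: "'a set \<Rightarrow> 'a set set \<Rightarrow> 'a set \<Rightarrow> bool" where
  "max_dissociation_set V E D \<longleftrightarrow> dissociation_set V E D \<and> card D = dissociation_number V E"

definition in_Bl :: "nat \<Rightarrow> nat \<Rightarrow> 'a set \<Rightarrow> 'a set set \<Rightarrow> bool" where
  "in_Bl k \<phi> V E \<longleftrightarrow> block_graph V E \<and> card V = k \<and> dissociation_number V E = \<phi>"

text \<open>Eigenvalues of the adjacency matrix (rows/columns indexed by V), and the spectral radius
  as the largest eigenvalue (the adjacency matrix is real symmetric, so all eigenvalues are real).\<close>
definition adj_eigenvalue :: "'a set \<Rightarrow> 'a set set \<Rightarrow> real \<Rightarrow> bool" where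
  "adj_eigenvalue V E \<mu> \<longleftrightarrow> (\<exists>x :: 'a \<Rightarrow> real. (\<exists>v\<in>V. x v \<noteq> 0) \<and>
     (\<forall>v\<in>V. (\<Sum>u\<in>V. (if adj E u v then 1 else 0) * x u) = \<mu> * x v))"

definition spectral_radius :: "'a set \<Rightarrow> 'a set set \<Rightarrow> real" where
  "spectral_radius V E = Max {\<mu>. adj_eigenvalue V E \<mu>}"

definition max_spectral_in_Bl :: "nat \<Rightarrow> nat \<Rightarrow> 'a set \<Rightarrow> 'a set set \<Rightarrow> bool" where
  "max_spectral_in_Bl k \<phi> V E \<longleftrightarrow> in_Bl k \<phi> V E \<and>
     (\<forall>(V' :: 'a set) E'. in_Bl k \<phi> V' E' \<longrightarrow> spectral_radius V' E' \<le> spectral_radius V E)"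

end

(*
  In each of the three cases there are two blocks B1, B2 sharing a vertex such that D stays a
  dissociation set after joining every vertex of B1 to every vertex of B2: in case (i) a block
  missing D and a neighbouring block; in case (ii) two blocks through the cut vertex v in D, one
  of which meets D only in v, since v has at most one neighbour in D; in case (iii) the two given
  blocks, whose vertices a, b in D have no neighbours in D (otherwise a or b would be a cut vertex
  in D, which is case (ii)), so that the new edge ab is harmless.

  The merged graph is again a block graph on the same vertices, B1 and B2 fusing into one block,
  and its dissociation number is unchanged, since adding edges creates no new dissociation sets.
  But it has an extra edge, and adding an edge to a connected graph strictly increases the
  spectral radius: evaluate the Rayleigh quotient of the new graph at the positive Perron vector
  of the old one.
*)
theory Submission
  imports Defs "HOL-Analysis.Analysis" "Jordan_Normal_Form.Char_Poly"
begin

section \<open>Rayleigh quotient and spectral radius\<close>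

lemma adj_commute: "adj E u v = adj E v u"
  by (simp add: adj_def insert_commute)

definition adj_weight :: "'a set set \<Rightarrow> 'a \<Rightarrow> 'a \<Rightarrow> real" where
  "adj_weight E u v = (if adj E u v then 1 else 0)"

definition adj_form :: "'a set \<Rightarrow> 'a set set \<Rightarrow> ('a \<Rightarrow> real) \<Rightarrow> real" where
  "adj_form V E x = (\<Sum>u\<in>V. \<Sum>w\<in>V. adj_weight E u w * x u * x w)"

definition sq_norm :: "'a set \<Rightarrow> ('a \<Rightarrow> real) \<Rightarrow> real" where
  "sq_norm V x = (\<Sum>v\<in>V. (x v)\<^sup>2)"

lemma adj_weight_commute: "adj_weight E u v = adj_weight E v u"
  by (simp add: adj_weight_def adj_commute)

lemma adj_eigenvalueI:
  assumes "v \<in> V" "x v \<noteq> 0" "\<And>v. v \<in> V \<Longrightarrow> (\<Sum>u\<in>V. adj_weight E u v * x u) = \<mu> * x v"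
  shows "adj_eigenvalue V E \<mu>"
  using assms unfolding adj_eigenvalue_def adj_weight_def by blast

lemma adj_eigenvalueE:
  assumes "adj_eigenvalue V E \<mu>"
  obtains v x where "v \<in> V" "x v \<noteq> 0"
    "\<And>v. v \<in> V \<Longrightarrow> (\<Sum>u\<in>V. adj_weight E u v * x u) = \<mu> * x v"
  using assms unfolding adj_eigenvalue_def adj_weight_def by blast

lemma sq_norm_nonneg: "sq_norm V x \<ge> 0"
  by (simp add: sq_norm_def sum_nonneg)

lemma sq_le_sq_norm:
  assumes "finite V" "v \<in> V"
  shows "(x v)\<^sup>2 \<le> sq_norm V x"
  unfolding sq_norm_def by (rule member_le_sum) (use assms in auto)

lemma sq_norm_pos:
  assumes "finite V" "v \<in> V" "x v \<noteq> 0"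
  shows "sq_norm V x > 0"
  using sq_le_sq_norm[OF assms(1,2), of x] assms(3) by (meson less_le_trans zero_less_power2)

lemma sq_norm_eq_0_iff:
  assumes "finite V"
  shows "sq_norm V x = 0 \<longleftrightarrow> (\<forall>v\<in>V. x v = 0)"
  using sq_norm_pos[OF assms] by (force simp: sq_norm_def)

lemma adj_form_eigenvector:
  assumes "\<And>v. v \<in> V \<Longrightarrow> (\<Sum>u\<in>V. adj_weight E u v * x u) = \<mu> * x v"
  shows "adj_form V E x = \<mu> * sq_norm V x"
proof -
  have "adj_form V E x = (\<Sum>w\<in>V. x w * (\<Sum>u\<in>V. adj_weight E u w * x u))"
    unfolding adj_form_def by (subst sum.swap) (simp add: sum_distrib_left algebra_simps)
  also have "\<dots> = (\<Sum>w\<in>V. \<mu> * (x w)\<^sup>2)"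
    using assms by (intro sum.cong) (auto simp: power2_eq_square)
  finally show ?thesis
    by (simp add: sq_norm_def sum_distrib_left)
qed

lemma linear_le_quadratic_imp_zero:
  fixes d c :: real
  assumes "\<And>t. 2 * t * d \<le> c * t\<^sup>2"
  shows "d = 0"
proof (rule ccontr)
  assume "d \<noteq> 0"
  define t where "t = d / (\<bar>c\<bar> + 1)"
  have "t\<^sup>2 > 0" using \<open>d \<noteq> 0\<close> by (simp add: t_def)
  have "2 * (\<bar>c\<bar> + 1) * t\<^sup>2 = 2 * t * (t * (\<bar>c\<bar> + 1))"
    by (simp add: power2_eq_square)
  also have "\<dots> = 2 * t * d" by (simp add: t_def)
  also have "\<dots> \<le> c * t\<^sup>2" by (rule assms)
  also have "\<dots> \<le> \<bar>c\<bar> * t\<^sup>2" by (simp add: mult_right_mono)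
  finally show False using \<open>t\<^sup>2 > 0\<close> by (simp add: mult_le_cancel_right)
qed

lemma adj_form_add_unit:
  assumes "finite V" "v \<in> V"
  shows "adj_form V E (\<lambda>i. y i + t * of_bool (i = v)) =
    adj_form V E y + 2 * t * (\<Sum>u\<in>V. adj_weight E u v * y u) + t\<^sup>2 * adj_weight E v v"
proof -
  let ?e = "\<lambda>i. of_bool (i = v) :: real" and ?a = "adj_weight E"
  have expand: "?a u w * (y u + t * ?e u) * (y w + t * ?e w) =
      ?a u w * y u * y w + t * (?a u w * y u * ?e w) + t * (?a w u * y w * ?e u)
      + t\<^sup>2 * (?a u w * ?e u * ?e w)" for u w
    by (simp add: adj_weight_commute[of E w u] algebra_simps power2_eq_square)
  have "adj_form V E (\<lambda>i. y i + t * ?e i) =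
      adj_form V E y + t * (\<Sum>u\<in>V. \<Sum>w\<in>V. ?a u w * y u * ?e w)
      + t * (\<Sum>u\<in>V. \<Sum>w\<in>V. ?a w u * y w * ?e u)
      + t\<^sup>2 * (\<Sum>u\<in>V. \<Sum>w\<in>V. ?a u w * ?e u * ?e w)"
    unfolding adj_form_def expand by (simp add: sum.distrib sum_distrib_left)
  also have "(\<Sum>u\<in>V. \<Sum>w\<in>V. ?a w u * y w * ?e u) = (\<Sum>u\<in>V. \<Sum>w\<in>V. ?a u w * y u * ?e w)"
    by (rule sum.swap)
  also have "(\<Sum>u\<in>V. \<Sum>w\<in>V. ?a u w * y u * ?e w) = (\<Sum>u\<in>V. ?a u v * y u)"
    using assms by simp
  also have "(\<Sum>u\<in>V. \<Sum>w\<in>V. ?a u w * ?e u * ?e w) = ?a v v"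
    using assms by (simp add: Int_insert_left if_distrib[of "sum _"] cong: if_cong)
  finally show ?thesis
    by (simp add: algebra_simps)
qed

lemma sq_norm_add_unit:
  assumes "finite V" "v \<in> V"
  shows "sq_norm V (\<lambda>i. y i + t * of_bool (i = v)) = sq_norm V y + 2 * t * y v + t\<^sup>2"
proof -
  have "(y i + t * of_bool (i = v))\<^sup>2 = (y i)\<^sup>2 + of_bool (i = v) * (2 * t * y v + t\<^sup>2)" for i
    by (simp add: power2_eq_square algebra_simps)
  then show ?thesis
    using assms by (simp add: sq_norm_def sum.distrib)
qed

text \<open>Perturbing y in the direction of a coordinate vector gives an inequality that is linear in
  t on the left and quadratic in t on the right.\<close>

lemma rayleigh_maximiser_eigenvector:
  assumes "finite V" "v \<in> V"
    and bound: "\<And>x. adj_form V E x \<le> R * sq_norm V x"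
    and attained: "adj_form V E y = R * sq_norm V y"
  shows "(\<Sum>u\<in>V. adj_weight E u v * y u) = R * y v"
proof -
  have "2 * t * ((\<Sum>u\<in>V. adj_weight E u v * y u) - R * y v) \<le> (R - adj_weight E v v) * t\<^sup>2" for t
    using bound[of "\<lambda>i. y i + t * of_bool (i = v)"] attained
    by (simp add: adj_form_add_unit sq_norm_add_unit assms(1,2) algebra_simps)
  then show ?thesis
    using linear_le_quadratic_imp_zero by fastforce
qed

lemma adj_form_cong: "(\<And>i. i \<in> V \<Longrightarrow> x i = y i) \<Longrightarrow> adj_form V E x = adj_form V E y"
  unfolding adj_form_def by (intro sum.cong) auto

lemma sq_norm_cong: "(\<And>i. i \<in> V \<Longrightarrow> x i = y i) \<Longrightarrow> sq_norm V x = sq_norm V y"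
  unfolding sq_norm_def by (intro sum.cong) auto

lemma adj_form_scale: "adj_form V E (\<lambda>i. c * x i) = c\<^sup>2 * adj_form V E x"
  unfolding adj_form_def by (simp add: sum_distrib_left power2_eq_square algebra_simps)

lemma sq_norm_scale: "sq_norm V (\<lambda>i. c * x i) = c\<^sup>2 * sq_norm V x"
  unfolding sq_norm_def by (simp add: sum_distrib_left power_mult_distrib)

lemma continuous_on_adj_form: "continuous_on UNIV (adj_form V E)"
  unfolding adj_form_def
  by (intro continuous_on_sum continuous_on_mult continuous_on_const continuous_on_product_coordinates)

lemma continuous_on_sq_norm: "continuous_on UNIV (sq_norm V)"
  unfolding sq_norm_def
  by (intro continuous_on_sum continuous_on_power continuous_on_product_coordinates)

lemma adj_form_max_on_unit_sphere:
  assumes fin: "finite V" and "V \<noteq> {}"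
  obtains z where "sq_norm V z = 1" "\<And>y. sq_norm V y = 1 \<Longrightarrow> adj_form V E y \<le> adj_form V E z"
proof -
  define Box where "Box = PiE UNIV (\<lambda>i. if i \<in> V then {-1..1} else {0::real})"
  define K where "K = Box \<inter> {x. sq_norm V x = 1}"
  have "compactin (product_topology (\<lambda>i. euclidean) UNIV) Box"
    unfolding Box_def by (subst compactin_PiE) auto
  then have "compact K"
    unfolding K_def
    by (intro compact_Int_closed closed_Collect_eq continuous_on_sq_norm continuous_on_const)
      (simp add: euclidean_product_topology)
  obtain v where v: "v \<in> V" using \<open>V \<noteq> {}\<close> by blast
  have "(\<lambda>i. of_bool (i = v)) \<in> K"
    using v fin by (auto simp: K_def Box_def sq_norm_def PiE_iff power2_eq_square)
  then obtain z where "z \<in> K" and z_max: "\<And>y. y \<in> K \<Longrightarrow> adj_form V E y \<le> adj_form V E z"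
    using continuous_attains_sup[OF \<open>compact K\<close> _ continuous_on_subset[OF continuous_on_adj_form]]
    by blast
  have "adj_form V E y \<le> adj_form V E z" if "sq_norm V y = 1" for y
  proof -
    define y' where "y' = (\<lambda>i. if i \<in> V then y i else 0)"
    have y': "sq_norm V y' = 1" "adj_form V E y' = adj_form V E y"
      using that sq_norm_cong[of V y' y] adj_form_cong[of V y' y] by (simp_all add: y'_def)
    have "\<bar>y' i\<bar> \<le> 1" if "i \<in> V" for i
      using sq_le_sq_norm[OF fin that, of y'] y'(1) by (simp add: abs_square_le_1)
    then have "y' \<in> K"
      using y'(1) by (auto simp: K_def Box_def PiE_iff y'_def abs_le_iff)
    then have "adj_form V E y' \<le> adj_form V E z"
      by (rule z_max)
    then show ?thesis
      using y'(2) by simp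
  qed
  moreover have "sq_norm V z = 1"
    using \<open>z \<in> K\<close> by (simp add: K_def)
  ultimately show ?thesis
    using that by blast
qed

lemma rayleigh_maximiser_exists:
  assumes "finite V" "V \<noteq> {}"
  obtains z where "sq_norm V z = 1" "\<And>x. adj_form V E x \<le> adj_form V E z * sq_norm V x"
proof -
  obtain z where z: "sq_norm V z = 1"
    and z_max: "\<And>y. sq_norm V y = 1 \<Longrightarrow> adj_form V E y \<le> adj_form V E z"
    using adj_form_max_on_unit_sphere[OF assms] by metis
  have "adj_form V E x \<le> adj_form V E z * sq_norm V x" for x
  proof (cases "sq_norm V x = 0")
    case True
    then have "adj_form V E x = adj_form V E (\<lambda>_. 0)"
      using assms(1) by (intro adj_form_cong) (simp add: sq_norm_eq_0_iff)
    then show ?thesis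
      using True by (simp add: adj_form_def)
  next
    case False
    then have pos: "sq_norm V x > 0"
      using sq_norm_nonneg[of V x] by simp
    define c where "c = 1 / sqrt (sq_norm V x)"
    have c2: "c\<^sup>2 * sq_norm V x = 1"
      using pos by (simp add: c_def power_divide)
    then have "c\<^sup>2 * adj_form V E x \<le> adj_form V E z"
      using z_max[of "\<lambda>i. c * x i"] by (simp add: adj_form_scale sq_norm_scale)
    have "adj_form V E x = c\<^sup>2 * adj_form V E x * sq_norm V x"
      using c2 by (simp add: algebra_simps)
    also have "\<dots> \<le> adj_form V E z * sq_norm V x"
      using \<open>c\<^sup>2 * adj_form V E x \<le> adj_form V E z\<close> pos by (simp add: mult_right_mono)
    finally show ?thesis .
  qed
  with z that show ?thesis
    by blast
qed

lemma adj_eigenvalue_imp_eigenvalue: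
  assumes f: "bij_betw f {0..<n} V" and \<mu>: "adj_eigenvalue V E \<mu>"
  shows "eigenvalue (mat n n (\<lambda>(i, j). adj_weight E (f j) (f i)) :: real mat) \<mu>"
proof -
  define M :: "real mat" where "M = mat n n (\<lambda>(i, j). adj_weight E (f j) (f i))"
  have M: "M \<in> carrier_mat n n"
    by (simp add: M_def)
  obtain v x where v: "v \<in> V" "x v \<noteq> 0"
    and x_eig: "\<And>v. v \<in> V \<Longrightarrow> (\<Sum>u\<in>V. adj_weight E u v * x u) = \<mu> * x v"
    using \<mu> by (metis adj_eigenvalueE)
  define w where "w = vec n (\<lambda>i. x (f i))"
  have w: "w \<in> carrier_vec n"
    by (simp add: w_def)
  obtain i where "i < n" "f i = v"
    using v f unfolding bij_betw_def by auto
  then have "vec_index w i \<noteq> 0"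
    using v by (simp add: w_def)
  then have "w \<noteq> 0\<^sub>v n"
    using \<open>i < n\<close> by auto
  moreover have "M *\<^sub>v w = \<mu> \<cdot>\<^sub>v w"
  proof (rule eq_vecI)
    show "dim_vec (M *\<^sub>v w) = dim_vec (\<mu> \<cdot>\<^sub>v w)"
      using M w by simp
    fix i assume "i < dim_vec (\<mu> \<cdot>\<^sub>v w)"
    then have i: "i < n" using w by simp
    have "vec_index (M *\<^sub>v w) i = (\<Sum>j\<in>{0..<n}. adj_weight E (f j) (f i) * x (f j))"
      using i M unfolding M_def w_def by (simp add: scalar_prod_def)
    also have "\<dots> = (\<Sum>u\<in>V. adj_weight E u (f i) * x u)"
      using sum.reindex_bij_betw[OF f, of "\<lambda>u. adj_weight E u (f i) * x u"] by simp
    also have "\<dots> = \<mu> * x (f i)"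
      using x_eig f i unfolding bij_betw_def by auto
    also have "\<dots> = vec_index (\<mu> \<cdot>\<^sub>v w) i"
      using i unfolding w_def by simp
    finally show "vec_index (M *\<^sub>v w) i = vec_index (\<mu> \<cdot>\<^sub>v w) i" .
  qed
  ultimately have "eigenvector M w \<mu>"
    unfolding eigenvector_def using M w by simp
  then show ?thesis
    unfolding eigenvalue_def M_def by blast
qed

text \<open>Since spectral_radius is defined as a Max, the eigenvalues have to be shown to be finitely
  many: they are roots of the characteristic polynomial of the adjacency matrix, with the vertices
  numbered by a bijection from {0..<card V}.\<close>

lemma finite_adj_eigenvalues:
  assumes "finite V"
  shows "finite {\<mu>. adj_eigenvalue V E \<mu>}"
proof -
  obtain f where f: "bij_betw f {0..<card V} V"
    using ex_bij_betw_nat_finite[OF assms] by blast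
  define M :: "real mat" where "M = mat (card V) (card V) (\<lambda>(i, j). adj_weight E (f j) (f i))"
  have M: "M \<in> carrier_mat (card V) (card V)"
    by (simp add: M_def)
  have "{\<mu>. adj_eigenvalue V E \<mu>} \<subseteq> {\<mu>. poly (char_poly M) \<mu> = 0}"
    using adj_eigenvalue_imp_eigenvalue[OF f, of E, folded M_def] eigenvalue_root_char_poly[OF M]
    by blast
  moreover have "char_poly M \<noteq> 0"
    using degree_monic_char_poly[OF M] by auto
  ultimately show ?thesis
    by (metis finite_subset poly_roots_finite)
qed

lemma adj_eigenvalue_le:
  assumes "finite V" "\<And>x. adj_form V E x \<le> R * sq_norm V x" "adj_eigenvalue V E \<mu>"
  shows "\<mu> \<le> R"
proof -
  obtain v x where "v \<in> V" "x v \<noteq> 0"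
    and "\<And>v. v \<in> V \<Longrightarrow> (\<Sum>u\<in>V. adj_weight E u v * x u) = \<mu> * x v"
    using assms(3) by (metis adj_eigenvalueE)
  then have "\<mu> * sq_norm V x \<le> R * sq_norm V x" and "sq_norm V x > 0"
    using assms(1) assms(2)[of x] adj_form_eigenvector[of V E x \<mu>] sq_norm_pos[of V v x] by simp_all
  then show ?thesis by simp
qed

lemma adj_form_le_abs: "adj_form V E x \<le> adj_form V E (\<lambda>i. \<bar>x i\<bar>)"
  unfolding adj_form_def
  by (intro sum_mono) (simp add: adj_weight_def abs_mult[symmetric] abs_ge_self)

text \<open>The absolute value of a maximiser of the Rayleigh quotient is again a maximiser, hence a
  nonnegative eigenvector (Perron vector) for the largest eigenvalue.\<close>

lemma perron_vector_exists:
  assumes fin: "finite V" and "V \<noteq> {}"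
  obtains y where "sq_norm V y = 1" "\<And>i. y i \<ge> 0"
    "adj_form V E y = spectral_radius V E"
    "\<And>x. adj_form V E x \<le> spectral_radius V E * sq_norm V x"
    "\<And>v. v \<in> V \<Longrightarrow> (\<Sum>u\<in>V. adj_weight E u v * y u) = spectral_radius V E * y v"
proof -
  obtain z where norm_z: "sq_norm V z = 1"
    and bound: "\<And>x. adj_form V E x \<le> adj_form V E z * sq_norm V x"
    using rayleigh_maximiser_exists[OF assms] by blast
  define R where "R = adj_form V E z"
  define y where "y = (\<lambda>i. \<bar>z i\<bar>)"
  have norm_y: "sq_norm V y = 1"
    using norm_z by (simp add: y_def sq_norm_def)
  have "adj_form V E y = R * sq_norm V y"
    using bound[of y] adj_form_le_abs[of V E z] norm_y by (simp add: R_def y_def)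
  then have eig: "(\<Sum>u\<in>V. adj_weight E u v * y u) = R * y v" if "v \<in> V" for v
    using rayleigh_maximiser_eigenvector[OF fin that] bound by (simp add: R_def)
  obtain v where "v \<in> V" "y v \<noteq> 0"
    using norm_y sq_norm_eq_0_iff[OF fin, of y] by auto
  then have "adj_eigenvalue V E R"
    using eig by (rule adj_eigenvalueI)
  then have "spectral_radius V E = R"
    unfolding spectral_radius_def
    using finite_adj_eigenvalues[OF fin] adj_eigenvalue_le[OF fin bound]
    by (intro Max_eqI) (auto simp: R_def)
  then show ?thesis
    using that[of y] norm_y eig bound \<open>adj_form V E y = R * sq_norm V y\<close>
    by (simp add: R_def y_def)
qed

lemma adj_form_le_spectral_radius:
  assumes "finite V" "V \<noteq> {}"
  shows "adj_form V E x \<le> spectral_radius V E * sq_norm V x"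
  using perron_vector_exists[OF assms] by metis

lemma perron_vector_pos:
  assumes fin: "finite V" and conn: "connected_on E V"
    and nonneg: "\<And>i. y i \<ge> 0" and norm: "sq_norm V y = 1"
    and eig: "\<And>v. v \<in> V \<Longrightarrow> (\<Sum>u\<in>V. adj_weight E u v * y u) = R * y v"
    and "v \<in> V"
  shows "y v > 0"
proof -
  obtain v0 where v0: "v0 \<in> V" "y v0 > 0"
    using norm nonneg sq_norm_eq_0_iff[OF fin, of y] by (force simp: less_le)
  have step: "y u > 0" if "y w > 0" "w \<in> V" "u \<in> V" "adj E w u" for u w
  proof -
    have "y w \<le> (\<Sum>w'\<in>V. adj_weight E w' u * y w')"
      using member_le_sum[of w V "\<lambda>w'. adj_weight E w' u * y w'"] that fin nonneg
      by (simp add: adj_weight_def)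
    then have "R * y u > 0"
      using eig[OF that(3)] that(1) by simp
    then show ?thesis
      using nonneg[of u] by (cases "y u = 0") auto
  qed
  have "(\<lambda>a b. a \<in> V \<and> b \<in> V \<and> adj E a b)\<^sup>*\<^sup>* v0 v"
    using conn v0 \<open>v \<in> V\<close> by (simp add: connected_on_def)
  then show "y v > 0"
    by (induction rule: rtranclp_induct) (use v0 step in auto)
qed

text \<open>The positive Perron vector of the old graph has a strictly larger Rayleigh quotient in the
  new one.\<close>

lemma spectral_radius_strict_mono:
  assumes fin: "finite V" and conn: "connected_on E V"
    and sub: "\<And>u w. adj E u w \<Longrightarrow> adj E' u w"
    and new: "p \<in> V" "q \<in> V" "adj E' p q" "\<not> adj E p q"
  shows "spectral_radius V E < spectral_radius V E'"
proof -
  have "V \<noteq> {}" using new by blast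
  obtain y where norm: "sq_norm V y = 1" and nonneg: "\<And>i. y i \<ge> 0"
    and rho: "adj_form V E y = spectral_radius V E"
    and eig: "\<And>v. v \<in> V \<Longrightarrow> (\<Sum>u\<in>V. adj_weight E u v * y u) = spectral_radius V E * y v"
    using perron_vector_exists[OF fin \<open>V \<noteq> {}\<close>] by metis
  have pos: "v \<in> V \<Longrightarrow> y v > 0" for v
    using perron_vector_pos[OF fin conn nonneg norm eig] .
  define gain where "gain = (\<lambda>u w. (adj_weight E' u w - adj_weight E u w) * y u * y w)"
  have gain_nonneg: "gain u w \<ge> 0" for u w
    using nonneg sub by (auto simp: gain_def adj_weight_def)
  have "gain p q > 0"
    using new pos by (simp add: gain_def adj_weight_def)
  also have "gain p q \<le> (\<Sum>w\<in>V. gain p w)"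
    using new fin gain_nonneg by (intro member_le_sum) auto
  also have "\<dots> \<le> (\<Sum>u\<in>V. \<Sum>w\<in>V. gain u w)"
    using new fin gain_nonneg by (intro member_le_sum[of p V "\<lambda>u. \<Sum>w\<in>V. gain u w"] sum_nonneg) auto
  also have "\<dots> = adj_form V E' y - adj_form V E y"
    by (simp add: adj_form_def gain_def left_diff_distrib sum_subtractf)
  finally show ?thesis
    using adj_form_le_spectral_radius[OF fin \<open>V \<noteq> {}\<close>, of E' y] norm rho by simp
qed

section \<open>Walks and connectivity\<close>

definition induced_adj :: "'a set set \<Rightarrow> 'a set \<Rightarrow> 'a \<Rightarrow> 'a \<Rightarrow> bool" where
  "induced_adj E S = (\<lambda>x y. x \<in> S \<and> y \<in> S \<and> adj E x y)"

lemma connected_on_iff: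
  "connected_on E S \<longleftrightarrow> S \<noteq> {} \<and> (\<forall>u\<in>S. \<forall>v\<in>S. (induced_adj E S)\<^sup>*\<^sup>* u v)"
  by (simp add: connected_on_def induced_adj_def)

lemma induced_adj_rtranclp_sym:
  "(induced_adj E S)\<^sup>*\<^sup>* a b \<Longrightarrow> (induced_adj E S)\<^sup>*\<^sup>* b a"
proof (induction rule: rtranclp_induct)
  case (step b c)
  then have "induced_adj E S c b"
    by (simp add: induced_adj_def adj_commute)
  then show ?case
    using step.IH by (rule converse_rtranclp_into_rtranclp)
qed simp

lemma induced_adj_rtranclp_mono:
  "S \<subseteq> T \<Longrightarrow> (induced_adj E S)\<^sup>*\<^sup>* a b \<Longrightarrow> (induced_adj E T)\<^sup>*\<^sup>* a b"
  by (rule rtranclp_mono[THEN predicate2D, rotated]) (auto simp: induced_adj_def)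

lemma connected_on_via:
  assumes "S \<noteq> {}" "c \<in> S" "\<And>u. u \<in> S \<Longrightarrow> (induced_adj E S)\<^sup>*\<^sup>* u c"
  shows "connected_on E S"
  unfolding connected_on_iff
  using assms induced_adj_rtranclp_sym by (metis rtranclp_trans)

lemma walk_reaches:
  "successively (adj E) xs \<Longrightarrow> set xs \<subseteq> S \<Longrightarrow> a \<in> set xs \<Longrightarrow> (induced_adj E S)\<^sup>*\<^sup>* (hd xs) a"
proof (induction xs)
  case (Cons x xs)
  show ?case
  proof (cases "a = x")
    case False
    then have a: "a \<in> set xs" and "xs \<noteq> []"
      using Cons.prems by auto
    then have "successively (adj E) xs" and "induced_adj E S x (hd xs)"
      using Cons.prems by (cases xs; simp add: induced_adj_def)+
    then show ?thesis
      using Cons.IH Cons.prems a by (simp add: converse_rtranclp_into_rtranclp)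
  qed simp
qed simp

lemma connected_on_walk:
  assumes "successively (adj E) xs" "xs \<noteq> []"
  shows "connected_on E (set xs)"
  using assms walk_reaches[OF assms(1) order_refl]
  by (intro connected_on_via[of _ "hd xs"]) (auto intro: induced_adj_rtranclp_sym)

lemma connected_on_Un:
  assumes "connected_on E S" "connected_on E T" "c \<in> S" "c \<in> T"
  shows "connected_on E (S \<union> T)"
proof (rule connected_on_via)
  fix u assume "u \<in> S \<union> T"
  then show "(induced_adj E (S \<union> T))\<^sup>*\<^sup>* u c"
    using assms induced_adj_rtranclp_mono[of S "S \<union> T"] induced_adj_rtranclp_mono[of T "S \<union> T"]
    unfolding connected_on_iff by blast
qed (use assms in auto)

lemma connected_on_mono:
  assumes "\<And>p q. adj E p q \<Longrightarrow> adj E' p q" "connected_on E S"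
  shows "connected_on E' S"
proof -
  have "induced_adj E S \<le> induced_adj E' S"
    using assms(1) by (auto simp: induced_adj_def)
  then show ?thesis
    using assms(2) rtranclp_mono unfolding connected_on_iff by blast
qed

lemma connected_on_cong:
  assumes "\<And>a b. a \<in> S \<Longrightarrow> b \<in> S \<Longrightarrow> adj E a b \<longleftrightarrow> adj E' a b" "T \<subseteq> S"
  shows "connected_on E T \<longleftrightarrow> connected_on E' T"
proof -
  have "induced_adj E T = induced_adj E' T"
    using assms by (auto simp: induced_adj_def fun_eq_iff)
  then show ?thesis
    by (simp add: connected_on_iff)
qed

lemma reachable_imp_walk:
  "(induced_adj E S)\<^sup>*\<^sup>* a b \<Longrightarrow> a \<in> S \<Longrightarrow>
   \<exists>xs. xs \<noteq> [] \<and> hd xs = a \<and> last xs = b \<and> successively (adj E) xs \<and> set xs \<subseteq> S"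
proof (induction rule: rtranclp_induct)
  case base
  then show ?case by (intro exI[of _ "[a]"]) simp
next
  case (step b c)
  then obtain xs where "xs \<noteq> []" "hd xs = a" "last xs = b" "successively (adj E) xs" "set xs \<subseteq> S"
    by blast
  with step.hyps(2) show ?case
    by (intro exI[of _ "xs @ [c]"]) (auto simp: successively_append_iff induced_adj_def)
qed

lemma walk_imp_path:
  "successively R xs \<Longrightarrow> xs \<noteq> [] \<Longrightarrow> \<exists>ys. distinct ys \<and> successively R ys \<and> ys \<noteq> [] \<and>
     hd ys = hd xs \<and> last ys = last xs \<and> set ys \<subseteq> set xs"
proof (induction "length xs" arbitrary: xs rule: less_induct)
  case less
  show ?case
  proof (cases "distinct xs")
    case False
    then obtain as y bs cs where xs: "xs = as @ [y] @ bs @ [y] @ cs"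
      using not_distinct_decomp by blast
    define xs' where "xs' = as @ [y] @ cs"
    have "successively R (as @ [y])"
      using less.prems(1) successively_append_iff[of R "as @ [y]" "bs @ [y] @ cs"]
      unfolding xs by simp
    moreover have "successively R (y # cs)"
      using less.prems(1) successively_append_iff[of R "as @ [y] @ bs" "y # cs"]
      unfolding xs by simp
    ultimately have "successively R xs'"
      unfolding xs'_def by (cases cs) (auto simp: successively_append_iff)
    moreover have "length xs' < length xs" "xs' \<noteq> []"
      "hd xs' = hd xs" "last xs' = last xs" "set xs' \<subseteq> set xs"
      unfolding xs xs'_def by (auto simp: hd_append)
    ultimately show ?thesis
      using less.hyps[of xs'] by fastforce
  qed (use less.prems in blast)
qed

lemma reachable_imp_path:
  assumes "(induced_adj E S)\<^sup>*\<^sup>* a b" "a \<in> S"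
  obtains xs where "distinct xs" "successively (adj E) xs" "xs \<noteq> []"
    "hd xs = a" "last xs = b" "set xs \<subseteq> S"
proof -
  obtain ws where "ws \<noteq> []" "hd ws = a" "last ws = b" "successively (adj E) ws" "set ws \<subseteq> S"
    using reachable_imp_walk[OF assms] by blast
  with walk_imp_path[of "adj E" ws] that show ?thesis
    by fastforce
qed

lemma walk_first_entry:
  "successively P xs \<Longrightarrow> xs \<noteq> [] \<Longrightarrow> hd xs \<notin> W \<Longrightarrow> last xs \<in> W \<Longrightarrow>
   \<exists>ys. ys \<noteq> [] \<and> hd ys = hd xs \<and> last ys \<in> W \<and> successively (\<lambda>p q. p \<notin> W \<and> P p q) ys
      \<and> set ys \<subseteq> set xs \<and> (\<forall>z\<in>set ys. z \<notin> W \<or> z = last ys)"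
proof (induction xs)
  case (Cons x xs)
  then have "xs \<noteq> []" "successively P xs" "P x (hd xs)"
    by (cases xs; simp)+
  show ?case
  proof (cases "hd xs \<in> W")
    case True
    then show ?thesis
      using Cons.prems(3) \<open>P x (hd xs)\<close> \<open>xs \<noteq> []\<close> by (intro exI[of _ "[x, hd xs]"]) auto
  next
    case False
    then obtain ys where "ys \<noteq> []" "hd ys = hd xs" "last ys \<in> W"
      "successively (\<lambda>p q. p \<notin> W \<and> P p q) ys" "set ys \<subseteq> set xs"
      "\<forall>z\<in>set ys. z \<notin> W \<or> z = last ys"
      using Cons \<open>xs \<noteq> []\<close> \<open>successively P xs\<close> by auto
    then show ?thesis
      using Cons.prems(3) \<open>P x (hd xs)\<close> by (intro exI[of _ "x # ys"]) (auto simp: successively_Cons)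
  qed
qed simp

lemma reachable_leaves_set:
  "(induced_adj E V)\<^sup>*\<^sup>* b y \<Longrightarrow> b \<in> B \<Longrightarrow> y \<notin> B \<Longrightarrow> \<exists>w z. w \<in> B \<and> z \<notin> B \<and> adj E w z"
proof (induction rule: rtranclp_induct)
  case (step c d)
  then show ?case
    by (cases "c \<in> B") (auto simp: induced_adj_def)
qed simp

section \<open>Nonseparable sets and blocks\<close>

lemma nonsep_on_iff:
  "nonsep_on E S \<longleftrightarrow> connected_on E S \<and> (\<forall>t\<in>S. S - {t} = {} \<or> connected_on E (S - {t}))"
  by (auto simp: nonsep_on_def cut_vertex_on_def)

lemma nonsep_on_Diff:
  assumes "nonsep_on E S" "S - {t} \<noteq> {}"
  shows "connected_on E (S - {t})"
proof (cases "t \<in> S")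
  case True
  with assms show ?thesis
    unfolding nonsep_on_iff by blast
qed (use assms(1) in \<open>simp add: nonsep_on_iff\<close>)

lemma nonsep_on_Un:
  assumes S: "nonsep_on E S" and T: "nonsep_on E T"
    and ab: "a \<in> S" "a \<in> T" "b \<in> S" "b \<in> T" "a \<noteq> b"
  shows "nonsep_on E (S \<union> T)"
  unfolding nonsep_on_iff
proof (intro conjI ballI)
  show "connected_on E (S \<union> T)"
    using connected_on_Un[of E S T a] S T ab by (simp add: nonsep_on_iff)
  fix t
  have "connected_on E (S - {t})"
    by (rule nonsep_on_Diff[OF S]) (use ab in auto)
  moreover have "connected_on E (T - {t})"
    by (rule nonsep_on_Diff[OF T]) (use ab in auto)
  moreover obtain c where "c \<in> S - {t}" "c \<in> T - {t}"
    using ab by (cases "t = a") auto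
  ultimately have "connected_on E ((S - {t}) \<union> (T - {t}))"
    by (rule connected_on_Un)
  then show "S \<union> T - {t} = {} \<or> connected_on E (S \<union> T - {t})"
    by (simp add: Un_Diff)
qed

lemma nonsep_on_cong:
  assumes "\<And>a b. a \<in> S \<Longrightarrow> b \<in> S \<Longrightarrow> adj E a b \<longleftrightarrow> adj E' a b"
  shows "nonsep_on E S \<longleftrightarrow> nonsep_on E' S"
  using connected_on_cong[OF assms] unfolding nonsep_on_iff by (metis Diff_subset order_refl)

lemma nonsep_on_path_into:
  assumes S: "nonsep_on E S" and x: "x \<in> S" "x \<notin> W" and c: "c \<in> S" "c \<noteq> x"
    and b: "b \<in> S" "b \<in> W" "b \<noteq> c"
  obtains ys where "ys \<noteq> []" "hd ys = x" "last ys \<in> W" "last ys \<noteq> c" "set ys \<subseteq> S"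
    "successively (\<lambda>p q. p \<notin> W \<and> adj E p q) ys" "\<And>z. z \<in> set ys \<Longrightarrow> z \<notin> W \<or> z = last ys"
proof -
  have "x \<in> S - {c}" "b \<in> S - {c}"
    using x b c by auto
  moreover have "connected_on E (S - {c})"
    by (rule nonsep_on_Diff[OF S]) (use \<open>x \<in> S - {c}\<close> in blast)
  ultimately have "(induced_adj E (S - {c}))\<^sup>*\<^sup>* x b"
    unfolding connected_on_iff by blast
  then obtain xs where "xs \<noteq> []" "hd xs = x" "last xs = b" "successively (adj E) xs" "set xs \<subseteq> S - {c}"
    using reachable_imp_walk \<open>x \<in> S - {c}\<close> by metis
  then obtain ys where ys: "ys \<noteq> []" "hd ys = x" "last ys \<in> W" "set ys \<subseteq> S - {c}"
    "successively (\<lambda>p q. p \<notin> W \<and> adj E p q) ys" "\<forall>z\<in>set ys. z \<notin> W \<or> z = last ys"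
    using walk_first_entry[of "adj E" xs W] x b by auto
  then have "last ys \<noteq> c"
    using last_in_set by fastforce
  with ys show ?thesis
    using that[of ys] by auto
qed

lemma successively_take_drop:
  assumes "successively P xs"
  shows "successively P (take i xs)" "successively P (drop i xs)"
  using assms successively_append_iff[of P "take i xs" "drop i xs"] by simp_all

text \<open>Removing the vertex xs ! i from a cycle leaves the path drop (Suc i) xs @ take i xs.\<close>

lemma cycle_nonsep_on:
  assumes dist: "distinct xs" and walk: "successively (adj E) xs" and "xs \<noteq> []"
    and closed: "adj E (last xs) (hd xs)"
  shows "nonsep_on E (set xs)"
  unfolding nonsep_on_iff
proof (intro conjI ballI)
  show "connected_on E (set xs)"
    using walk \<open>xs \<noteq> []\<close> by (rule connected_on_walk)
  fix t assume "t \<in> set xs"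
  then obtain i where i: "i < length xs" "xs ! i = t"
    by (auto simp: in_set_conv_nth)
  have split: "take i xs @ t # drop (Suc i) xs = xs"
    using id_take_nth_drop[OF i(1)] i(2) by simp
  have "distinct (take i xs @ t # drop (Suc i) xs)" "set (take i xs @ t # drop (Suc i) xs) = set xs"
    by (simp_all only: split dist)
  define ys where "ys = drop (Suc i) xs @ take i xs"
  then have "set ys = set xs - {t}"
    using \<open>distinct (take i xs @ t # drop (Suc i) xs)\<close> \<open>set (take i xs @ t # drop (Suc i) xs) = set xs\<close>
    by auto
  moreover have "successively (adj E) ys"
  proof -
    have "successively (adj E) (take i xs)" "successively (adj E) (drop (Suc i) xs)"
      using successively_take_drop[OF walk] by blast+
    moreover have "adj E (last (drop (Suc i) xs)) (hd (take i xs))"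
      if "drop (Suc i) xs \<noteq> []" "take i xs \<noteq> []"
      using closed that by (simp add: hd_take)
    ultimately show ?thesis
      unfolding ys_def successively_append_iff by blast
  qed
  ultimately show "set xs - {t} = {} \<or> connected_on E (set xs - {t})"
    using connected_on_walk[of E ys] by fastforce
qed

lemma edge_nonsep_on: "adj E u w \<Longrightarrow> u \<noteq> w \<Longrightarrow> nonsep_on E {u, w}"
  using cycle_nonsep_on[of "[u, w]" E] by (simp add: adj_commute)

lemma nonsep_on_ne: "nonsep_on E S \<Longrightarrow> S \<noteq> {}"
  by (simp add: nonsep_on_def connected_on_def)

lemma blockD: "block V E B \<Longrightarrow> B \<subseteq> V" "block V E B \<Longrightarrow> nonsep_on E B"
  by (simp_all add: block_def)

lemma block_graphD:
  assumes "block_graph V E"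
  shows "finite V" "simple_graph V E" "connected_on E V"
  using assms by (simp_all add: block_graph_def connected_graph_def simple_graph_def)

lemma block_graph_block_adj:
  "block_graph V E \<Longrightarrow> block V E B \<Longrightarrow> u \<in> B \<Longrightarrow> w \<in> B \<Longrightarrow> u \<noteq> w \<Longrightarrow> adj E u w"
  by (simp add: block_graph_def)

lemma simple_graph_adjD:
  assumes "simple_graph V E" "adj E u w"
  shows "u \<noteq> w" "u \<in> V" "w \<in> V"
proof -
  have "{u, w} \<subseteq> V" "card {u, w} = 2"
    using assms by (auto simp: simple_graph_def adj_def)
  then show "u \<noteq> w" "u \<in> V" "w \<in> V"
    by (auto simp: card_insert_if split: if_splits)
qed

lemma nonsep_on_subset_block:
  assumes "finite V" "S \<subseteq> V" "nonsep_on E S"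
  obtains B where "block V E B" "S \<subseteq> B"
proof -
  define C where "C = {T. S \<subseteq> T \<and> T \<subseteq> V \<and> nonsep_on E T}"
  have "finite C" "S \<in> C"
    using assms by (auto simp: C_def intro: finite_subset[of _ "Pow V"])
  then obtain B where B: "B \<in> C" and max: "\<And>T. T \<in> C \<Longrightarrow> card T \<le> card B"
    using Max_in[of "card ` C"] Max_ge[of "card ` C"] by (metis empty_iff finite_imageI imageE image_eqI)
  have "block V E B"
    unfolding block_def
  proof (intro conjI allI impI)
    show "B \<subseteq> V" "nonsep_on E B" using B by (auto simp: C_def)
    fix B' assume B': "B \<subseteq> B' \<and> B' \<subseteq> V \<and> nonsep_on E B'"
    then have "B' \<in> C" using B by (auto simp: C_def)
    then show "B' = B"
      using B' max[of B'] assms(1) by (metis card_seteq finite_subset)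
  qed
  with B that show ?thesis by (auto simp: C_def)
qed

lemma block_graph_nonsep_adj:
  assumes "block_graph V E" "S \<subseteq> V" "nonsep_on E S" "u \<in> S" "w \<in> S" "u \<noteq> w"
  shows "adj E u w"
proof -
  obtain B where "block V E B" "S \<subseteq> B"
    using nonsep_on_subset_block[OF block_graphD(1)[OF assms(1)] assms(2,3)] .
  then show ?thesis
    using block_graph_block_adj[OF assms(1)] assms(4-6) by blast
qed

lemma edge_in_block:
  assumes "block_graph V E" "adj E u w"
  obtains B where "block V E B" "u \<in> B" "w \<in> B"
proof -
  have "u \<noteq> w" "u \<in> V" "w \<in> V"
    using simple_graph_adjD[OF block_graphD(2)[OF assms(1)] assms(2)] by auto
  then obtain B where "block V E B" "{u, w} \<subseteq> B"
    using nonsep_on_subset_block[OF block_graphD(1)[OF assms(1)], of "{u, w}" E]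
      edge_nonsep_on[OF assms(2)] by auto
  then show ?thesis
    using that by simp
qed

lemma cycle_subset_block:
  assumes B: "block V E B" and "distinct xs" "successively (adj E) xs" "xs \<noteq> []"
    "adj E (last xs) (hd xs)" "set xs \<subseteq> V"
    and ab: "a \<in> set xs" "b \<in> set xs" "a \<in> B" "b \<in> B" "a \<noteq> b"
  shows "set xs \<subseteq> B"
proof -
  have "nonsep_on E (set xs \<union> B)"
    using nonsep_on_Un[OF cycle_nonsep_on[OF assms(2-5)] blockD(2)[OF B] ab(1,3,2,4,5)] .
  moreover have "set xs \<union> B \<subseteq> V"
    using assms(6) blockD(1)[OF B] by blast
  ultimately have "set xs \<union> B = B"
    using B unfolding block_def by blast
  then show ?thesis by blast
qed

lemma block_graph_path_subset_block:
  assumes bg: "block_graph V E" and B: "block V E B"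
    and ps: "distinct ps" "successively (adj E) ps" "ps \<noteq> []" "set ps \<subseteq> V"
    and ends: "hd ps \<in> B" "last ps \<in> B" "hd ps \<noteq> last ps"
  shows "set ps \<subseteq> B"
proof -
  have "adj E (last ps) (hd ps)"
    using block_graph_block_adj[OF bg B ends(2,1)] ends(3) by simp
  then show ?thesis
    using cycle_subset_block[OF B ps(1-3) _ ps(4) hd_in_set[OF ps(3)] last_in_set[OF ps(3)] ends]
    by blast
qed

lemma block_eqI:
  assumes "block V E B1" "block V E B2" "a \<in> B1" "a \<in> B2" "b \<in> B1" "b \<in> B2" "a \<noteq> b"
  shows "B1 = B2"
proof -
  have "nonsep_on E (B1 \<union> B2)"
    using nonsep_on_Un[OF blockD(2)[OF assms(1)] blockD(2)[OF assms(2)] assms(3-7)] .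
  moreover have "B1 \<union> B2 \<subseteq> V"
    using blockD(1)[OF assms(1)] blockD(1)[OF assms(2)] by blast
  ultimately show ?thesis
    using assms(1,2) unfolding block_def by (metis sup.cobounded1 sup.cobounded2)
qed

lemma block_not_subset:
  assumes "block V E B1" "block V E B2" "B1 \<noteq> B2"
  obtains x where "x \<in> B1" "x \<notin> B2"
  using assms unfolding block_def by blast

lemma adjacent_block_exists:
  assumes bg: "block_graph V E" and B: "block V E B" and "y \<in> V" "y \<notin> B"
  obtains B' w where "block V E B'" "B' \<noteq> B" "w \<in> B" "w \<in> B'"
proof -
  obtain b where "b \<in> B"
    using nonsep_on_ne[OF blockD(2)[OF B]] by blast
  then have "(induced_adj E V)\<^sup>*\<^sup>* b y"
    using block_graphD(3)[OF bg] blockD(1)[OF B] \<open>y \<in> V\<close> unfolding connected_on_iff by blast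
  then obtain w z where "w \<in> B" "z \<notin> B" "adj E w z"
    using reachable_leaves_set \<open>b \<in> B\<close> \<open>y \<notin> B\<close> by metis
  moreover obtain B' where "block V E B'" "w \<in> B'" "z \<in> B'"
    using edge_in_block[OF bg \<open>adj E w z\<close>] .
  ultimately show ?thesis
    using that by blast
qed

lemma cut_vertex_if_outer_neighbour:
  assumes bg: "block_graph V E" and B: "block V E B" and x: "x \<in> B" and "adj E x u" "u \<notin> B"
  shows "cut_vertex_on E V x"
proof -
  have "x \<noteq> u" "x \<in> V" "u \<in> V"
    using simple_graph_adjD[OF block_graphD(2)[OF bg] \<open>adj E x u\<close>] by auto
  obtain p where p: "p \<in> B" "p \<noteq> x"
  proof (rule ccontr)
    assume "\<not> thesis"
    then have "B \<subseteq> {x, u}"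
      using that by blast
    moreover have "nonsep_on E {x, u}" "{x, u} \<subseteq> V"
      using edge_nonsep_on[OF \<open>adj E x u\<close> \<open>x \<noteq> u\<close>] \<open>x \<in> V\<close> \<open>u \<in> V\<close> by auto
    ultimately have "{x, u} = B"
      using B unfolding block_def by blast
    with \<open>u \<notin> B\<close> show False by blast
  qed
  have "\<not> connected_on E (V - {x})"
  proof
    assume "connected_on E (V - {x})"
    moreover have "p \<in> V - {x}" "u \<in> V - {x}"
      using p blockD(1)[OF B] \<open>u \<in> V\<close> \<open>x \<noteq> u\<close> by auto
    ultimately have "(induced_adj E (V - {x}))\<^sup>*\<^sup>* p u"
      unfolding connected_on_iff by blast
    then obtain ps where ps: "distinct ps" "successively (adj E) ps" "ps \<noteq> []"
      "hd ps = p" "last ps = u" "set ps \<subseteq> V - {x}"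
      using reachable_imp_path \<open>p \<in> V - {x}\<close> by metis
    have "set (ps @ [x]) \<subseteq> B"
      using ps p x \<open>x \<in> V\<close> \<open>adj E x u\<close>
      by (intro block_graph_path_subset_block[OF bg B])
        (auto simp: successively_append_iff adj_commute)
    moreover have "u \<in> set ps"
      using ps(3,5) last_in_set by metis
    ultimately show False
      using \<open>u \<notin> B\<close> by auto
  qed
  then show ?thesis
    using \<open>x \<in> V\<close> \<open>u \<in> V\<close> \<open>x \<noteq> u\<close> unfolding cut_vertex_on_def by blast
qed

lemma reaches_neighbour_avoiding:
  assumes conn: "connected_on E V" and "v \<in> V" "y \<in> V" "y \<noteq> v"
  obtains q where "adj E q v" "q \<in> V - {v}" "(induced_adj E (V - {v}))\<^sup>*\<^sup>* y q"
proof -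
  have "(induced_adj E V)\<^sup>*\<^sup>* y v"
    using conn assms(2,3) unfolding connected_on_iff by blast
  then obtain ps where ps: "distinct ps" "successively (adj E) ps" "ps \<noteq> []"
    "hd ps = y" "last ps = v" "set ps \<subseteq> V"
    using reachable_imp_path assms(3) by metis
  define qs where "qs = butlast ps"
  have ps_qs: "ps = qs @ [v]"
    unfolding qs_def using ps(3,5) append_butlast_last_id by metis
  then have "qs \<noteq> []"
    using ps(4) assms(4) by auto
  have walk: "successively (adj E) qs" and "adj E (last qs) v"
    using ps(2) \<open>qs \<noteq> []\<close> unfolding ps_qs successively_append_iff by auto
  have qs_V: "set qs \<subseteq> V - {v}"
    using ps(1,6) unfolding ps_qs by auto
  have "hd qs = y"
    using ps(4) \<open>qs \<noteq> []\<close> unfolding ps_qs by simp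
  then have "(induced_adj E (V - {v}))\<^sup>*\<^sup>* y (last qs)"
    using walk_reaches[OF walk qs_V] \<open>qs \<noteq> []\<close> by simp
  moreover have "last qs \<in> V - {v}"
    using qs_V last_in_set[OF \<open>qs \<noteq> []\<close>] by blast
  ultimately show ?thesis
    using that \<open>adj E (last qs) v\<close> by blast
qed

lemma connected_on_Diff_if_neighbours_in_block:
  assumes conn: "connected_on E V" and B: "block V E B" "v \<in> B" "B - {v} \<noteq> {}"
    and nbrs: "\<And>q. adj E v q \<Longrightarrow> q \<in> B"
  shows "connected_on E (V - {v})"
proof -
  have B_V: "B \<subseteq> V"
    using blockD(1)[OF B(1)] .
  have conn_B: "connected_on E (B - {v})"
    using nonsep_on_Diff[OF blockD(2)[OF B(1)] B(3)] .
  obtain c where c: "c \<in> B - {v}"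
    using B(3) by blast
  have "(induced_adj E (V - {v}))\<^sup>*\<^sup>* y c" if y: "y \<in> V - {v}" for y
  proof -
    obtain q where q: "adj E q v" "q \<in> V - {v}" "(induced_adj E (V - {v}))\<^sup>*\<^sup>* y q"
      using reaches_neighbour_avoiding[OF conn] B(2) B_V y by blast
    then have "q \<in> B - {v}"
      using nbrs[of q] by (simp add: adj_commute)
    then have "(induced_adj E (V - {v}))\<^sup>*\<^sup>* q c"
      using conn_B c B_V induced_adj_rtranclp_mono[of "B - {v}" "V - {v}"]
      unfolding connected_on_iff by blast
    with q(3) show ?thesis
      by (rule rtranclp_trans)
  qed
  then show ?thesis
    using c B_V by (intro connected_on_via[of _ c]) auto
qed

lemma cut_vertex_in_two_blocks:
  assumes bg: "block_graph V E" and cut: "cut_vertex_on E V v"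
  obtains B1 B2 where "block V E B1" "block V E B2" "B1 \<noteq> B2" "v \<in> B1" "v \<in> B2"
proof -
  have "v \<in> V" "V - {v} \<noteq> {}" "\<not> connected_on E (V - {v})"
    using cut by (auto simp: cut_vertex_on_def)
  then obtain y where "y \<in> V" "y \<notin> {v}"
    by blast
  then have "(induced_adj E V)\<^sup>*\<^sup>* v y"
    using block_graphD(3)[OF bg] \<open>v \<in> V\<close> unfolding connected_on_iff by blast
  then obtain p where "adj E v p" "p \<noteq> v"
    using reachable_leaves_set[of E V v y "{v}"] \<open>y \<notin> {v}\<close> by (metis singletonD singletonI)
  then obtain B1 where B1: "block V E B1" "v \<in> B1" "p \<in> B1"
    using edge_in_block[OF bg] by metis
  have "B1 - {v} \<noteq> {}"
    using B1(3) \<open>p \<noteq> v\<close> by blast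
  then obtain q where "adj E v q" "q \<notin> B1"
    using connected_on_Diff_if_neighbours_in_block[OF block_graphD(3)[OF bg] B1(1,2)]
      \<open>\<not> connected_on E (V - {v})\<close> by blast
  then obtain B2 where "block V E B2" "v \<in> B2" "q \<in> B2"
    using edge_in_block[OF bg] by metis
  with B1 \<open>q \<notin> B1\<close> that show ?thesis
    by blast
qed

section \<open>Merging two blocks\<close>

definition merge_blocks :: "'a set set \<Rightarrow> 'a set \<Rightarrow> 'a set \<Rightarrow> 'a set set" where
  "merge_blocks E B1 B2 = E \<union> {{x, y} | x y. x \<in> B1 \<and> y \<in> B2 \<and> x \<noteq> y}"

lemma adj_merge_blocks:
  "adj (merge_blocks E B1 B2) x y \<longleftrightarrow> adj E x y \<or> (x \<noteq> y \<and> (x \<in> B1 \<and> y \<in> B2 \<or> y \<in> B1 \<and> x \<in> B2))"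
  unfolding adj_def merge_blocks_def by (auto simp: doubleton_eq_iff)

definition outer_adj :: "'a set set \<Rightarrow> 'a set \<Rightarrow> 'a \<Rightarrow> 'a \<Rightarrow> bool" where
  "outer_adj E W p q \<longleftrightarrow> adj E p q \<and> (p \<notin> W \<or> q \<notin> W)"

lemma outer_adj_commute: "outer_adj E W p q = outer_adj E W q p"
  by (auto simp: outer_adj_def adj_commute)

text \<open>A path leaving two blocks that share a vertex v and returning to them closes, directly or
  through v, a cycle that would have to lie in one of the blocks.\<close>

lemma no_detour_between_blocks:
  assumes bg: "block_graph V E" and B: "block V E B1" "block V E B2" and v: "v \<in> B1" "v \<in> B2"
    and ps: "ps \<noteq> []" "distinct ps" "successively (outer_adj E (B1 \<union> B2)) ps" "set ps \<subseteq> V"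
    and ends: "hd ps \<in> B1 \<union> B2" "last ps \<in> B1 \<union> B2" "hd ps \<noteq> last ps"
    and inner: "\<And>z. z \<in> set ps \<Longrightarrow> z \<notin> B1 \<union> B2 \<or> z = hd ps \<or> z = last ps"
  shows False
proof -
  obtain p0 p1 rest where "ps = p0 # p1 # rest"
    using ps(1) ends(3) by (metis last_ConsL last_ConsR list.sel(1) neq_Nil_conv)
  then obtain z where z: "z \<in> set ps" "z \<notin> B1 \<union> B2"
    using ps(3) by (auto simp: outer_adj_def)
  have walk: "successively (adj E) ps"
    using ps(3) by (rule successively_mono) (simp add: outer_adj_def)
  have path_in: "set qs \<subseteq> C"
    if "C \<in> {B1, B2}" "distinct qs" "successively (adj E) qs" "qs \<noteq> []" "set qs \<subseteq> V"
      "hd qs \<in> C" "last qs \<in> C" "hd qs \<noteq> last qs" for C qs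
    using block_graph_path_subset_block[OF bg, of C qs] that B by blast
  show False
  proof (cases "\<exists>C\<in>{B1, B2}. hd ps \<in> C \<and> last ps \<in> C")
    case True
    then obtain C where C: "C \<in> {B1, B2}" "hd ps \<in> C" "last ps \<in> C"
      by blast
    then show False
      using path_in[OF C(1) ps(2) walk ps(1,4) C(2,3) ends(3)] z C(1) by blast
  next
    case False
    obtain C1 C2 where C: "C1 \<in> {B1, B2}" "C2 \<in> {B1, B2}" "hd ps \<in> C1" "last ps \<in> C2"
      using ends(1,2) by blast
    then have "v \<noteq> hd ps" "v \<noteq> last ps" "v \<in> C1" "v \<in> C2"
      using False v by auto
    then have "v \<notin> set ps"
      using inner v by blast
    moreover have "adj E (last ps) v"
      using block_graph_block_adj[of V E C2 "last ps" v] bg B C(2,4) \<open>v \<in> C2\<close> \<open>v \<noteq> last ps\<close> by blast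
    ultimately have "set (ps @ [v]) \<subseteq> C1"
      using path_in[OF C(1), of "ps @ [v]"] ps walk C(3) \<open>v \<in> C1\<close> \<open>v \<noteq> hd ps\<close>
        blockD(1)[OF B(1)] v(1) by (auto simp: successively_append_iff)
    then show False
      using z C(1) by auto
  qed
qed

text \<open>Two paths from an outside vertex x into B1 \<union> B2, the second avoiding the end of the first,
  give a detour between the blocks; its edges leave B1 \<union> B2, so they are edges of E.\<close>

lemma merge_blocks_detour:
  assumes S: "nonsep_on (merge_blocks E B1 B2) S" and x: "x \<in> S" "x \<notin> B1 \<union> B2"
    and ab: "a \<in> S" "a \<in> B1 \<union> B2" "b \<in> S" "b \<in> B1 \<union> B2" "a \<noteq> b"
  obtains zs where "zs \<noteq> []" "successively (outer_adj E (B1 \<union> B2)) zs" "set zs \<subseteq> S"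
    "hd zs \<in> B1 \<union> B2" "last zs \<in> B1 \<union> B2" "hd zs \<noteq> last zs"
    "\<And>z. z \<in> set zs \<Longrightarrow> z \<notin> B1 \<union> B2 \<or> z = hd zs \<or> z = last zs"
proof -
  define W where "W = B1 \<union> B2"
  have outer: "successively (outer_adj E W) ys"
    if "successively (\<lambda>p q. p \<notin> W \<and> adj (merge_blocks E B1 B2) p q) ys" for ys
    using that by (rule successively_mono) (auto simp: outer_adj_def W_def adj_merge_blocks)
  obtain ys1 where ys1: "ys1 \<noteq> []" "hd ys1 = x" "last ys1 \<in> W" "last ys1 \<noteq> a" "set ys1 \<subseteq> S"
    "successively (outer_adj E W) ys1" "\<And>z. z \<in> set ys1 \<Longrightarrow> z \<notin> W \<or> z = last ys1"
    using nonsep_on_path_into[OF S x(1) _ ab(1) _ ab(3) _ ab(5)[symmetric], of W]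
      x ab outer unfolding W_def by (metis (no_types, lifting))
  define w1 where "w1 = last ys1"
  have "w1 \<in> S"
    using ys1 last_in_set unfolding w1_def by blast
  obtain ys2 where ys2: "ys2 \<noteq> []" "hd ys2 = x" "last ys2 \<in> W" "last ys2 \<noteq> w1" "set ys2 \<subseteq> S"
    "successively (outer_adj E W) ys2" "\<And>z. z \<in> set ys2 \<Longrightarrow> z \<notin> W \<or> z = last ys2"
    using nonsep_on_path_into[OF S x(1) _ \<open>w1 \<in> S\<close> _ ab(1) _ ys1(4)[folded w1_def, symmetric],
      of W] x ab ys1(3) outer unfolding W_def w1_def by (metis (no_types, lifting))
  obtain ys2' where ys2': "ys2 = x # ys2'" "ys2' \<noteq> []"
    using ys2(1-3) x(2) unfolding W_def by (cases ys2) (auto split: if_splits)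
  define zs where "zs = rev ys1 @ ys2'"
  have "outer_adj E W x (hd ys2')" "successively (outer_adj E W) ys2'"
    using ys2(6) ys2' by (cases ys2'; simp)+
  moreover have "successively (outer_adj E W) (rev ys1)"
    using ys1(6) by (simp add: outer_adj_commute[of E W _ _])
  ultimately have "successively (outer_adj E W) zs"
    using ys1(1,2) by (simp add: zs_def successively_append_iff last_rev)
  moreover have "zs \<noteq> []" "hd zs = w1" "last zs = last ys2" "set zs \<subseteq> S"
    using ys1 ys2 ys2' by (auto simp: zs_def w1_def hd_rev)
  moreover have "z \<notin> W \<or> z = hd zs \<or> z = last zs" if "z \<in> set zs" for z
    using that ys1(7) ys2(7) \<open>hd zs = w1\<close> \<open>last zs = last ys2\<close>
    unfolding zs_def w1_def ys2'(1) by auto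
  ultimately show ?thesis
    using that[of zs] ys1(3) ys2(3,4) unfolding W_def w1_def by auto
qed

lemma merge_blocks_nonsep_on_meets_once:
  assumes bg: "block_graph V E" and B: "block V E B1" "block V E B2" and v: "v \<in> B1" "v \<in> B2"
    and S: "S \<subseteq> V" "nonsep_on (merge_blocks E B1 B2) S"
    and x: "x \<in> S" "x \<notin> B1 \<union> B2"
    and ab: "a \<in> S" "a \<in> B1 \<union> B2" "b \<in> S" "b \<in> B1 \<union> B2"
  shows "a = b"
proof (rule ccontr)
  assume "a \<noteq> b"
  with merge_blocks_detour[OF S(2) x ab] obtain zs where zs: "zs \<noteq> []"
    "successively (outer_adj E (B1 \<union> B2)) zs" "set zs \<subseteq> S"
    "hd zs \<in> B1 \<union> B2" "last zs \<in> B1 \<union> B2" "hd zs \<noteq> last zs"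
    "\<And>z. z \<in> set zs \<Longrightarrow> z \<notin> B1 \<union> B2 \<or> z = hd zs \<or> z = last zs"
    by metis
  then obtain ps where ps: "distinct ps" "successively (outer_adj E (B1 \<union> B2)) ps" "ps \<noteq> []"
    "hd ps = hd zs" "last ps = last zs" "set ps \<subseteq> set zs"
    using walk_imp_path by metis
  show False
  proof (rule no_detour_between_blocks[OF bg B v ps(3,1,2)])
    show "set ps \<subseteq> V"
      using ps(6) zs(3) S(1) by blast
    show "hd ps \<in> B1 \<union> B2" "last ps \<in> B1 \<union> B2" "hd ps \<noteq> last ps"
      using ps(4,5) zs(4-6) by simp_all
    show "z \<notin> B1 \<union> B2 \<or> z = hd ps \<or> z = last ps" if "z \<in> set ps" for z
      using zs(7) that ps(4-6) by auto
  qed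
qed

lemma merge_blocks_nonsep_adj:
  assumes bg: "block_graph V E" and B: "block V E B1" "block V E B2" and v: "v \<in> B1" "v \<in> B2"
    and S: "S \<subseteq> V" "nonsep_on (merge_blocks E B1 B2) S"
    and uw: "u \<in> S" "w \<in> S" "u \<noteq> w"
  shows "adj (merge_blocks E B1 B2) u w"
proof (cases "S \<subseteq> B1 \<union> B2")
  case True
  then show ?thesis
    using block_graph_block_adj[OF bg B(1), of u w] block_graph_block_adj[OF bg B(2), of u w] uw
    by (auto simp: adj_merge_blocks)
next
  case False
  then obtain x where "x \<in> S" "x \<notin> B1 \<union> B2" by blast
  then have once: "a = b" if "a \<in> S" "a \<in> B1 \<union> B2" "b \<in> S" "b \<in> B1 \<union> B2" for a b
    using merge_blocks_nonsep_on_meets_once[OF bg B v S] that by blast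
  then have same: "adj E a b \<longleftrightarrow> adj (merge_blocks E B1 B2) a b" if "a \<in> S" "b \<in> S" for a b
    using that by (auto simp: adj_merge_blocks)
  then have "nonsep_on E S"
    using S(2) nonsep_on_cong[of S E "merge_blocks E B1 B2"] by blast
  then show ?thesis
    using block_graph_nonsep_adj[OF bg S(1) _ uw] same uw by blast
qed

lemma merge_blocks_block_graph:
  assumes bg: "block_graph V E" and B: "block V E B1" "block V E B2" and v: "v \<in> B1" "v \<in> B2"
  shows "block_graph V (merge_blocks E B1 B2)"
proof -
  have "simple_graph V (merge_blocks E B1 B2)"
    using block_graphD(1,2)[OF bg] blockD(1)[OF B(1)] blockD(1)[OF B(2)]
    by (auto simp: simple_graph_def merge_blocks_def)
  moreover have "connected_on (merge_blocks E B1 B2) V"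
    using connected_on_mono[OF _ block_graphD(3)[OF bg]] by (simp add: adj_merge_blocks)
  moreover have "adj (merge_blocks E B1 B2) u w"
    if "block V (merge_blocks E B1 B2) C" "u \<in> C" "w \<in> C" "u \<noteq> w" for C u w
    using merge_blocks_nonsep_adj[OF bg B v blockD[OF that(1)] that(2-4)] .
  ultimately show ?thesis
    by (simp add: block_graph_def connected_graph_def)
qed

lemma merge_blocks_new_edge:
  assumes bg: "block_graph V E" and B: "block V E B1" "block V E B2" "B1 \<noteq> B2"
    and v: "v \<in> B1" "v \<in> B2"
  obtains x y where "x \<in> V" "y \<in> V" "adj (merge_blocks E B1 B2) x y" "\<not> adj E x y"
proof -
  obtain x where x: "x \<in> B1" "x \<notin> B2"
    using block_not_subset[OF B] by blast
  obtain y where y: "y \<in> B2" "y \<notin> B1"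
    using block_not_subset[OF B(2,1) B(3)[symmetric]] by blast
  have "\<not> adj E x y"
  proof
    assume "adj E x y"
    moreover have "adj E y v"
      using block_graph_block_adj[OF bg B(2) y(1) v(2)] y v by auto
    ultimately have "set [x, y, v] \<subseteq> B1"
      using x y v blockD(1)[OF B(1)] blockD(1)[OF B(2)]
      by (intro block_graph_path_subset_block[OF bg B(1)]) auto
    with y show False by simp
  qed
  moreover have "adj (merge_blocks E B1 B2) x y"
    using x y by (auto simp: adj_merge_blocks)
  ultimately show ?thesis
    using that x y blockD(1)[OF B(1)] blockD(1)[OF B(2)] by blast
qed

section \<open>Dissociation sets\<close>

lemma dissociation_set_if_no_new_edges:
  assumes "finite V" "dissociation_set V E D"
    and "\<And>u w. u \<in> D \<Longrightarrow> w \<in> D \<Longrightarrow> adj E' u w \<Longrightarrow> adj E u w"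
  shows "dissociation_set V E' D"
  unfolding dissociation_set_def
proof (intro conjI ballI)
  show "D \<subseteq> V"
    using assms(2) by (simp add: dissociation_set_def)
  then have "finite D"
    using assms(1) finite_subset by blast
  fix w assume "w \<in> D"
  with \<open>finite D\<close> have "card {u \<in> D. adj E' u w} \<le> card {u \<in> D. adj E u w}"
    using assms(3) by (intro card_mono) auto
  also have "\<dots> \<le> 1"
    using assms(2) \<open>w \<in> D\<close> by (simp add: dissociation_set_def)
  finally show "card {u \<in> D. adj E' u w} \<le> 1" .
qed

lemma dissociation_set_add_edge:
  assumes "finite V" "dissociation_set V E D" "a \<in> D" "b \<in> D" "a \<noteq> b"
    and isolated: "\<And>u. u \<in> D \<Longrightarrow> \<not> adj E u a" "\<And>u. u \<in> D \<Longrightarrow> \<not> adj E u b"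
    and new: "\<And>u w. u \<in> D \<Longrightarrow> w \<in> D \<Longrightarrow> adj E' u w \<Longrightarrow> adj E u w \<or> {u, w} = {a, b}"
  shows "dissociation_set V E' D"
  unfolding dissociation_set_def
proof (intro conjI ballI)
  show "D \<subseteq> V"
    using assms(2) by (simp add: dissociation_set_def)
  then have "finite D"
    using assms(1) finite_subset by blast
  fix w assume "w \<in> D"
  show "card {u \<in> D. adj E' u w} \<le> 1"
  proof (cases "w = a \<or> w = b")
    case True
    then have "{u \<in> D. adj E' u w} \<subseteq> {a, b} - {w}"
      using new[OF _ \<open>w \<in> D\<close>] isolated \<open>a \<in> D\<close> \<open>b \<in> D\<close> \<open>a \<noteq> b\<close>
      by (auto simp: doubleton_eq_iff)
    then have "card {u \<in> D. adj E' u w} \<le> card ({a, b} - {w})"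
      by (intro card_mono) auto
    then show ?thesis
      using True \<open>a \<noteq> b\<close> by (auto simp: card_insert_if)
  next
    case False
    then have "{u \<in> D. adj E' u w} \<subseteq> {u \<in> D. adj E u w}"
      using new[OF _ \<open>w \<in> D\<close>] by (auto simp: doubleton_eq_iff)
    then have "card {u \<in> D. adj E' u w} \<le> card {u \<in> D. adj E u w}"
      using \<open>finite D\<close> by (intro card_mono) auto
    also have "\<dots> \<le> 1"
      using assms(2) \<open>w \<in> D\<close> by (simp add: dissociation_set_def)
    finally show ?thesis .
  qed
qed

lemma finite_dissociation_sets: "finite V \<Longrightarrow> finite {D. dissociation_set V E D}"
  by (rule finite_subset[of _ "Pow V"]) (auto simp: dissociation_set_def)

lemma card_le_dissociation_number:
  "finite V \<Longrightarrow> dissociation_set V E D \<Longrightarrow> card D \<le> dissociation_number V E"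
  unfolding dissociation_number_def using finite_dissociation_sets by (intro Max_ge) auto

lemma dissociation_number_pos:
  assumes "finite V" "v \<in> V"
  shows "dissociation_number V E \<ge> 1"
proof -
  have "dissociation_set V E {v}"
    unfolding dissociation_set_def
  proof (intro conjI ballI)
    fix w
    have "card {u \<in> {v}. adj E u w} \<le> card {v}"
      by (intro card_mono) auto
    then show "card {u \<in> {v}. adj E u w} \<le> 1"
      by simp
  qed (use assms(2) in simp)
  then show ?thesis
    using card_le_dissociation_number[OF assms(1)] by fastforce
qed

lemma dissociation_number_eqI:
  assumes "finite V" "\<And>p q. adj E p q \<Longrightarrow> adj E' p q"
    and "dissociation_set V E' D" "card D = dissociation_number V E"
  shows "dissociation_number V E' = dissociation_number V E"
proof (rule antisym)
  have "dissociation_set V E X" if "dissociation_set V E' X" for X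
    using dissociation_set_if_no_new_edges[OF assms(1) that assms(2)] .
  then have "card ` {X. dissociation_set V E' X} \<subseteq> card ` {X. dissociation_set V E X}"
    by blast
  then show "dissociation_number V E' \<le> dissociation_number V E"
    unfolding dissociation_number_def
    using assms(3) finite_dissociation_sets[OF assms(1)] by (intro Max_mono) auto
  show "dissociation_number V E \<le> dissociation_number V E'"
    using card_le_dissociation_number[OF assms(1,3)] assms(4) by simp
qed

section \<open>The three cases\<close>

lemma not_max_spectral_if_merge_keeps_dissociation_set:
  assumes inbl: "in_Bl k \<phi> V E" and md: "max_dissociation_set V E D"
    and B: "block V E B1" "block V E B2" "B1 \<noteq> B2" and v: "v \<in> B1" "v \<in> B2"
    and D: "dissociation_set V (merge_blocks E B1 B2) D"
  shows "\<not> max_spectral_in_Bl k \<phi> V E"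
proof
  assume max: "max_spectral_in_Bl k \<phi> V E"
  have bg: "block_graph V E"
    using inbl by (simp add: in_Bl_def)
  have sub: "\<And>p q. adj E p q \<Longrightarrow> adj (merge_blocks E B1 B2) p q"
    by (simp add: adj_merge_blocks)
  have "dissociation_number V (merge_blocks E B1 B2) = dissociation_number V E"
    using dissociation_number_eqI[OF block_graphD(1)[OF bg] sub D] md
    by (simp add: max_dissociation_set_def)
  then have "in_Bl k \<phi> V (merge_blocks E B1 B2)"
    using inbl merge_blocks_block_graph[OF bg B(1,2) v] by (simp add: in_Bl_def)
  then have "spectral_radius V (merge_blocks E B1 B2) \<le> spectral_radius V E"
    using max by (simp add: max_spectral_in_Bl_def)
  moreover obtain x y where "x \<in> V" "y \<in> V" "adj (merge_blocks E B1 B2) x y" "\<not> adj E x y"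
    using merge_blocks_new_edge[OF bg B v] .
  then have "spectral_radius V E < spectral_radius V (merge_blocks E B1 B2)"
    using spectral_radius_strict_mono[OF block_graphD(1,3)[OF bg] sub] by blast
  ultimately show False
    by simp
qed

lemma not_max_spectral_if_block_misses_dissociation_set:
  assumes inbl: "in_Bl k \<phi> V E" and md: "max_dissociation_set V E D"
    and B: "block V E B" "B \<inter> D = {}"
  shows "\<not> max_spectral_in_Bl k \<phi> V E"
proof -
  have bg: "block_graph V E" and D: "dissociation_set V E D" "card D = dissociation_number V E"
    using inbl md by (simp_all add: in_Bl_def max_dissociation_set_def)
  obtain y where "y \<in> V"
    using block_graphD(3)[OF bg] by (auto simp: connected_on_def)
  then have "card D \<ge> 1"
    using D(2) dissociation_number_pos[OF block_graphD(1)[OF bg]] by simp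
  then obtain d where "d \<in> D"
    by (metis card.empty ex_in_conv not_one_le_zero)
  moreover have "D \<subseteq> V"
    using D(1) by (simp add: dissociation_set_def)
  ultimately obtain B' w where B': "block V E B'" "B' \<noteq> B" "w \<in> B" "w \<in> B'"
    using adjacent_block_exists[OF bg B(1), of d] B(2) by blast
  have "dissociation_set V (merge_blocks E B B') D"
    using B(2) by (intro dissociation_set_if_no_new_edges[OF block_graphD(1)[OF bg] D(1)])
      (auto simp: adj_merge_blocks)
  then show ?thesis
    using not_max_spectral_if_merge_keeps_dissociation_set[OF inbl md B(1) B'(1)] B' by blast
qed

lemma not_max_spectral_if_block_meets_dissociation_set_at_shared_vertex:
  assumes inbl: "in_Bl k \<phi> V E" and md: "max_dissociation_set V E D"
    and C: "block V E C1" "block V E C2" "C1 \<noteq> C2" and v: "v \<in> C1" "v \<in> C2"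
    and C2_D: "C2 \<inter> D \<subseteq> {v}"
  shows "\<not> max_spectral_in_Bl k \<phi> V E"
proof -
  have bg: "block_graph V E" and D: "dissociation_set V E D"
    using inbl md by (simp_all add: in_Bl_def max_dissociation_set_def)
  have "adj E u w" if "u \<in> D" "w \<in> D" "adj (merge_blocks E C1 C2) u w" for u w
  proof -
    have "adj E u w \<or> u \<noteq> w \<and> (u \<in> C1 \<and> w = v \<or> w \<in> C1 \<and> u = v)"
      using that C2_D by (auto simp: adj_merge_blocks)
    then show ?thesis
      using block_graph_block_adj[OF bg C(1)] v(1) adj_commute by metis
  qed
  then have "dissociation_set V (merge_blocks E C1 C2) D"
    by (intro dissociation_set_if_no_new_edges[OF block_graphD(1)[OF bg] D])
  then show ?thesis
    by (rule not_max_spectral_if_merge_keeps_dissociation_set[OF inbl md C v])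
qed

lemma not_max_spectral_if_dissociation_set_has_cut_vertex:
  assumes inbl: "in_Bl k \<phi> V E" and md: "max_dissociation_set V E D"
    and v: "v \<in> D" "cut_vertex_on E V v"
  shows "\<not> max_spectral_in_Bl k \<phi> V E"
proof -
  have bg: "block_graph V E" and D: "dissociation_set V E D"
    using inbl md by (simp_all add: in_Bl_def max_dissociation_set_def)
  obtain B1 B2 where B: "block V E B1" "block V E B2" "B1 \<noteq> B2" "v \<in> B1" "v \<in> B2"
    using cut_vertex_in_two_blocks[OF bg v(2)] .
  have "B1 \<inter> D \<subseteq> {v} \<or> B2 \<inter> D \<subseteq> {v}"
  proof (rule ccontr)
    assume "\<not> ?thesis"
    then obtain d1 d2 where d: "d1 \<in> B1 \<inter> D" "d1 \<noteq> v" "d2 \<in> B2 \<inter> D" "d2 \<noteq> v"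
      by blast
    then have "d1 \<noteq> d2"
      using block_eqI[OF B(1,2), of d1 v] B(3-5) by blast
    moreover have "{d1, d2} \<subseteq> {u \<in> D. adj E u v}"
      using block_graph_block_adj[OF bg B(1), of d1 v] block_graph_block_adj[OF bg B(2), of d2 v] B d
      by auto
    moreover have "finite D"
      using D block_graphD(1)[OF bg] finite_subset by (auto simp: dissociation_set_def)
    ultimately have "2 \<le> card {u \<in> D. adj E u v}"
      using card_mono[of "{u \<in> D. adj E u v}" "{d1, d2}"] by simp
    then show False
      using D v(1) by (auto simp: dissociation_set_def)
  qed
  then show ?thesis
    using not_max_spectral_if_block_meets_dissociation_set_at_shared_vertex[OF inbl md] B
    by (metis (full_types))
qed

lemma sole_vertex_in_block_not_adj:
  assumes bg: "block_graph V E" and C: "block V E C" "C \<inter> D = {a}"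
    and no_cut: "\<And>d. d \<in> D \<Longrightarrow> \<not> cut_vertex_on E V d" and "u \<in> D"
  shows "\<not> adj E u a"
proof
  assume "adj E u a"
  have "a \<in> D" "a \<in> C"
    using C(2) by auto
  show False
  proof (cases "u \<in> C")
    case True
    then have "u = a"
      using C(2) \<open>u \<in> D\<close> by blast
    then show False
      using simple_graph_adjD(1)[OF block_graphD(2)[OF bg] \<open>adj E u a\<close>] by simp
  next
    case False
    then have "cut_vertex_on E V a"
      using cut_vertex_if_outer_neighbour[OF bg C(1) \<open>a \<in> C\<close>] \<open>adj E u a\<close> by (simp add: adj_commute)
    then show False
      using no_cut \<open>a \<in> D\<close> by blast
  qed
qed

lemma not_max_spectral_if_adjacent_blocks_meet_dissociation_set_once:
  assumes inbl: "in_Bl k \<phi> V E" and md: "max_dissociation_set V E D"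
    and B: "adjacent_blocks V E B1 B2" "card (B1 \<inter> D) = 1" "card (B2 \<inter> D) = 1"
    and no_cut: "\<And>d. d \<in> D \<Longrightarrow> \<not> cut_vertex_on E V d"
  shows "\<not> max_spectral_in_Bl k \<phi> V E"
proof -
  have bg: "block_graph V E" and D: "dissociation_set V E D"
    using inbl md by (simp_all add: in_Bl_def max_dissociation_set_def)
  obtain v where blocks: "block V E B1" "block V E B2" "B1 \<noteq> B2" and v: "v \<in> B1" "v \<in> B2"
    and "cut_vertex_on E V v"
    using B(1) unfolding adjacent_blocks_def by blast
  then have "v \<notin> D"
    using no_cut by blast
  obtain a b where a: "B1 \<inter> D = {a}" and b: "B2 \<inter> D = {b}"
    using B(2,3) by (meson card_1_singletonE)
  have "a \<noteq> b"
    using block_eqI[OF blocks(1,2), of a v] a b v \<open>v \<notin> D\<close> blocks(3) by blast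
  have "dissociation_set V (merge_blocks E B1 B2) D"
  proof (rule dissociation_set_add_edge[OF block_graphD(1)[OF bg] D _ _ \<open>a \<noteq> b\<close>])
    show "a \<in> D" "b \<in> D"
      using a b by auto
    show "\<not> adj E u a" "\<not> adj E u b" if "u \<in> D" for u
      using sole_vertex_in_block_not_adj[OF bg blocks(1) a no_cut that]
        sole_vertex_in_block_not_adj[OF bg blocks(2) b no_cut that] by auto
    show "adj E u w \<or> {u, w} = {a, b}"
      if "u \<in> D" "w \<in> D" "adj (merge_blocks E B1 B2) u w" for u w
      using that a b by (auto simp: adj_merge_blocks)
  qed
  then show ?thesis
    by (rule not_max_spectral_if_merge_keeps_dissociation_set[OF inbl md blocks v])
qed

theorem proposition2p1:
  fixes V :: "'a set" and E :: "'a set set" and D :: "'a set" and k \<phi> :: nat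
  assumes "in_Bl k \<phi> V E"
    and "max_dissociation_set V E D"
    and "(\<exists>B. block V E B \<and> card (B \<inter> D) = 0)
         \<or> (\<exists>v\<in>D. cut_vertex_on E V v)
         \<or> (\<exists>B1 B2. adjacent_blocks V E B1 B2 \<and> card (B1 \<inter> D) = 1 \<and> card (B2 \<inter> D) = 1)"
  shows "\<not> max_spectral_in_Bl k \<phi> V E"
  using assms(3)
proof (elim disjE exE conjE bexE)
  fix B assume "block V E B" "card (B \<inter> D) = 0"
  moreover have "finite B"
    using assms(1) \<open>block V E B\<close> block_graphD(1) blockD(1) finite_subset
    by (metis in_Bl_def)
  ultimately show ?thesis
    using not_max_spectral_if_block_misses_dissociation_set[OF assms(1,2)] by simp
next
  fix v assume "v \<in> D" "cut_vertex_on E V v"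
  then show ?thesis
    by (rule not_max_spectral_if_dissociation_set_has_cut_vertex[OF assms(1,2)])
next
  fix B1 B2 assume "adjacent_blocks V E B1 B2" "card (B1 \<inter> D) = 1" "card (B2 \<inter> D) = 1"
  then show ?thesis
    using not_max_spectral_if_dissociation_set_has_cut_vertex[OF assms(1,2)]
      not_max_spectral_if_adjacent_blocks_meet_dissociation_set_once[OF assms(1,2)] by blast
qed

end
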